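(* Let $K$ be a field of characteristic $p>0$, $(A,\circ)$ an associative commutative $K$-algebra and $D$ a derivation of $(A,\circ)$. For integers $0\le k\le l$ define a multiplication $\square=\square_{k,l}$ on $A$ by $$a\square b=D\big(D^{p^k-1}(a)\circ D^{p^l-1}(b)+D^{p^l-1}(a)\circ D^{p^k-1}(b)\big)\ \text{ if }k\neq l,\qquad a\square b=D\big(D^{p^k-1}(a)\circ D^{p^k-1}(b)\big)\ \text{ if }k=l.$$ (i) If $k=l$, or if $p=2$ and $l=k+1$, then $(A,\square)$ is Tortken. (ii) If $k\neq l$ and $p>2$, or if $p=2$ and $l-k>1$, then there exist an associative commutative algebra $(A,\circ)$ with a derivation $D$ such that $(A,\square)$ is not Tortken.
   Context: An algebra with multiplication $\star$ is Tortken if $(a\star b)\star(c\star d)-(a\star d)\star(c\star b)=(a,b,c)\star d-(a,d,c)\star b$ for all $a,b,c,d$, where $(a,b,c)=a\star(b\star c)-(a\star b)\star c$. $D^0$ is the identity map. *)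

theory Defs
  imports Main
begin

record ('k, 'a) kalg =
  carr :: "'a set"
  add  :: "'a \<Rightarrow> 'a \<Rightarrow> 'a"
  zer  :: "'a"
  neg  :: "'a \<Rightarrow> 'a"
  mul  :: "'a \<Rightarrow> 'a \<Rightarrow> 'a"
  smul :: "'k \<Rightarrow> 'a \<Rightarrow> 'a"

definition comm_assoc_kalg :: "('k::field, 'a) kalg \<Rightarrow> bool" where
  "comm_assoc_kalg R \<longleftrightarrow>
     zer R \<in> carr R \<and>
     (\<forall>a\<in>carr R. \<forall>b\<in>carr R. add R a b \<in> carr R \<and> mul R a b \<in> carr R) \<and>
     (\<forall>a\<in>carr R. neg R a \<in> carr R) \<and>
     (\<forall>c. \<forall>a\<in>carr R. smul R c a \<in> carr R) \<and>
     (\<forall>a\<in>carr R. \<forall>b\<in>carr R. \<forall>c\<in>carr R. add R (add R a b) c = add R a (add R b c)) \<and>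
     (\<forall>a\<in>carr R. \<forall>b\<in>carr R. add R a b = add R b a) \<and>
     (\<forall>a\<in>carr R. add R (zer R) a = a) \<and>
     (\<forall>a\<in>carr R. add R (neg R a) a = zer R) \<and>
     (\<forall>a\<in>carr R. smul R 1 a = a) \<and>
     (\<forall>c d. \<forall>a\<in>carr R. smul R (c * d) a = smul R c (smul R d a)) \<and>
     (\<forall>c d. \<forall>a\<in>carr R. smul R (c + d) a = add R (smul R c a) (smul R d a)) \<and>
     (\<forall>c. \<forall>a\<in>carr R. \<forall>b\<in>carr R. smul R c (add R a b) = add R (smul R c a) (smul R c b)) \<and>
     (\<forall>a\<in>carr R. \<forall>b\<in>carr R. \<forall>c\<in>carr R. mul R (mul R a b) c = mul R a (mul R b c)) \<and>
     (\<forall>a\<in>carr R. \<forall>b\<in>carr R. mul R a b = mul R b a) \<and>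
     (\<forall>a\<in>carr R. \<forall>b\<in>carr R. \<forall>c\<in>carr R. mul R a (add R b c) = add R (mul R a b) (mul R a c)) \<and>
     (\<forall>c. \<forall>a\<in>carr R. \<forall>b\<in>carr R. smul R c (mul R a b) = mul R (smul R c a) b \<and>
                                   smul R c (mul R a b) = mul R a (smul R c b))"

definition derivation :: "('k::field, 'a) kalg \<Rightarrow> ('a \<Rightarrow> 'a) \<Rightarrow> bool" where
  "derivation R D \<longleftrightarrow>
     (\<forall>a\<in>carr R. D a \<in> carr R) \<and>
     (\<forall>a\<in>carr R. \<forall>b\<in>carr R. D (add R a b) = add R (D a) (D b)) \<and>
     (\<forall>c. \<forall>a\<in>carr R. D (smul R c a) = smul R c (D a)) \<and>
     (\<forall>a\<in>carr R. \<forall>b\<in>carr R. D (mul R a b) = add R (mul R (D a) b) (mul R a (D b)))"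

definition sub :: "('k, 'a) kalg \<Rightarrow> 'a \<Rightarrow> 'a \<Rightarrow> 'a" where
  "sub R x y = add R x (neg R y)"

definition assoc :: "('k, 'a) kalg \<Rightarrow> ('a \<Rightarrow> 'a \<Rightarrow> 'a) \<Rightarrow> 'a \<Rightarrow> 'a \<Rightarrow> 'a \<Rightarrow> 'a" where
  "assoc R m a b c = sub R (m a (m b c)) (m (m a b) c)"

definition tortken :: "('k, 'a) kalg \<Rightarrow> ('a \<Rightarrow> 'a \<Rightarrow> 'a) \<Rightarrow> bool" where
  "tortken R m \<longleftrightarrow> (\<forall>a\<in>carr R. \<forall>b\<in>carr R. \<forall>c\<in>carr R. \<forall>d\<in>carr R.
      sub R (m (m a b) (m c d)) (m (m a d) (m c b)) =
      sub R (m (assoc R m a b c) d) (m (assoc R m a d c) b))"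

definition box :: "nat \<Rightarrow> nat \<Rightarrow> nat \<Rightarrow> ('k, 'a) kalg \<Rightarrow> ('a \<Rightarrow> 'a) \<Rightarrow> 'a \<Rightarrow> 'a \<Rightarrow> 'a" where
  "box p k l R D a b =
     (if k \<noteq> l then
        D (add R (mul R ((D ^^ (p ^ k - 1)) a) ((D ^^ (p ^ l - 1)) b))
                 (mul R ((D ^^ (p ^ l - 1)) a) ((D ^^ (p ^ k - 1)) b)))
      else D (mul R ((D ^^ (p ^ k - 1)) a) ((D ^^ (p ^ k - 1)) b)))"

end

theory Submission
  imports Defs "HOL-Algebra.Ring" "HOL-Computational_Algebra.Polynomial"
    "HOL-Computational_Algebra.Primes"
begin

text \<open>
  (i) Let \<open>E\<close> and \<open>F\<close> be linear maps whose composite \<open>G = E \<circ> F\<close> is a derivation, and let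
  \<open>a \<star> b = F (E a \<circ> E b)\<close>. Then \<open>E\<close> is a homomorphism from \<open>\<star>\<close> to \<open>x * y = G (x \<circ> y)\<close>,
  so the Tortken identity for \<open>\<star>\<close> is \<open>F\<close> applied to the identity
  \<open>(x * y) \<circ> (z * t) - (x * t) \<circ> (z * y) = (x, y, z) \<circ> t - (x, t, z) \<circ> y\<close> for \<open>*\<close>,
  whose two sides both expand, by the Leibniz rule, to \<open>x'yzt' + xy'z't - x'y'zt - xyz't'\<close>.
  For \<open>q = p\<^sup>k\<close> the iterate \<open>D\<^sup>q\<close> is again a derivation, since \<open>p\<close> divides the inner binomial
  coefficients of the Leibniz formula. Now \<open>\<box>\<^sub>k\<^sub>,\<^sub>k\<close> has the above form with \<open>E = D\<^sup>q\<^sup>-\<^sup>1\<close>,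
  \<open>F = D\<close>; for \<open>p = 2\<close> and \<open>l = k + 1\<close> the Leibniz rule for \<open>D\<^sup>q\<close> turns \<open>\<box>\<^sub>k\<^sub>,\<^sub>l\<close> into
  \<open>D\<^sup>q\<^sup>+\<^sup>1 (D\<^sup>q\<^sup>-\<^sup>1 a \<circ> D\<^sup>q\<^sup>-\<^sup>1 b)\<close>, so \<open>E = D\<^sup>q\<^sup>-\<^sup>1\<close>, \<open>F = D\<^sup>q\<^sup>+\<^sup>1\<close> and \<open>G = D\<^sup>2\<^sup>q\<close>.

  (ii) In the algebra of Hurwitz series, with basis \<open>e\<^sub>n = x\<^sup>n / n!\<close>, multiplication
  \<open>e\<^sub>i e\<^sub>j = (i + j choose i) e\<^sub>i\<^sub>+\<^sub>j\<close> and derivation \<open>D e\<^sub>n = e\<^sub>n\<^sub>-\<^sub>1\<close>, put \<open>q = p\<^sup>k\<close>, \<open>Q = p\<^sup>l\<close> and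
  \<open>a = e\<^sub>q\<^sub>-\<^sub>1\<close>, \<open>b = e\<^sub>Q\<^sub>-\<^sub>1\<close>, \<open>c = e\<^sub>2\<^sub>q\<^sub>-\<^sub>1\<close>, \<open>d = e\<^sub>2\<^sub>Q\<close>. If \<open>2q < Q\<close>, which is exactly the
  hypothesis of (ii), then \<open>a \<box> b = 0\<close> and \<open>(a \<box> d) \<box> (c \<box> b) = e\<^sub>0\<close>, while both associators on
  the right vanish; for \<open>(a, d, c)\<close> this uses \<open>(Q + q + 1 choose q) = q + 1\<close> modulo \<open>p\<close>.
\<close>

definition linear_endo :: "('k, 'a) kalg \<Rightarrow> ('a \<Rightarrow> 'a) \<Rightarrow> bool" where
  "linear_endo R H \<longleftrightarrow>
     (\<forall>a\<in>carr R. H a \<in> carr R) \<and>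
     (\<forall>a\<in>carr R. \<forall>b\<in>carr R. H (kalg.add R a b) = kalg.add R (H a) (H b)) \<and>
     (\<forall>c. \<forall>a\<in>carr R. H (smul R c a) = smul R c (H a))"

lemma derivation_iff_linear_endo:
  "derivation R D \<longleftrightarrow> linear_endo R D \<and>
     (\<forall>a\<in>carr R. \<forall>b\<in>carr R. D (kalg.mul R a b) = kalg.add R (kalg.mul R (D a) b) (kalg.mul R a (D b)))"
  unfolding derivation_def linear_endo_def by blast

lemma linear_endo_closed: "linear_endo R H \<Longrightarrow> x \<in> carr R \<Longrightarrow> H x \<in> carr R"
  by (simp add: linear_endo_def)

lemma linear_endo_funpow: "linear_endo R H \<Longrightarrow> linear_endo R (H ^^ n)"
  by (induction n) (simp_all add: linear_endo_def)

lemma derivation_linear_endo: "derivation R D \<Longrightarrow> linear_endo R D"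
  by (simp add: derivation_iff_linear_endo)

lemma derivation_funpow_linear_endo: "derivation R D \<Longrightarrow> linear_endo R (D ^^ n)"
  by (simp add: derivation_linear_endo linear_endo_funpow)

lemma derivation_closed: "derivation R D \<Longrightarrow> x \<in> carr R \<Longrightarrow> D x \<in> carr R"
  by (simp add: derivation_def)

lemma derivation_add:
  "derivation R D \<Longrightarrow> x \<in> carr R \<Longrightarrow> y \<in> carr R \<Longrightarrow> D (kalg.add R x y) = kalg.add R (D x) (D y)"
  by (simp add: derivation_def)

lemma derivation_mul:
  "derivation R D \<Longrightarrow> x \<in> carr R \<Longrightarrow> y \<in> carr R \<Longrightarrow>
    D (kalg.mul R x y) = kalg.add R (kalg.mul R (D x) y) (kalg.mul R x (D y))"
  by (simp add: derivation_def)

definition sym_box :: "nat \<Rightarrow> nat \<Rightarrow> ('k, 'a) kalg \<Rightarrow> ('a \<Rightarrow> 'a) \<Rightarrow> 'a \<Rightarrow> 'a \<Rightarrow> 'a" where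
  "sym_box q Q R D a b = D (kalg.add R (kalg.mul R ((D ^^ (q - 1)) a) ((D ^^ (Q - 1)) b))
                                    (kalg.mul R ((D ^^ (Q - 1)) a) ((D ^^ (q - 1)) b)))"

lemma box_eq_sym_box: "k \<noteq> l \<Longrightarrow> box p k l R D = sym_box (p ^ k) (p ^ l) R D"
  by (simp add: box_def sym_box_def fun_eq_iff)

primrec kalg_sum :: "('k, 'a) kalg \<Rightarrow> (nat \<Rightarrow> 'a) \<Rightarrow> nat \<Rightarrow> 'a" where
  "kalg_sum R f 0 = zer R"
| "kalg_sum R f (Suc n) = kalg.add R (kalg_sum R f n) (f n)"

locale comm_assoc_algebra =
  fixes R :: "('k::field, 'a) kalg"
  assumes comm_assoc_kalg: "comm_assoc_kalg R"
begin

abbreviation add_R (infixl "\<^bold>+" 65) where "x \<^bold>+ y \<equiv> kalg.add R x y"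
abbreviation sub_R (infixl "\<^bold>-" 65) where "x \<^bold>- y \<equiv> Defs.sub R x y"
abbreviation mul_R (infixl "\<^bold>*" 70) where "x \<^bold>* y \<equiv> kalg.mul R x y"

lemma zero_closed: "zer R \<in> carr R"
  and a_closed: "x \<in> carr R \<Longrightarrow> y \<in> carr R \<Longrightarrow> x \<^bold>+ y \<in> carr R"
  and m_closed: "x \<in> carr R \<Longrightarrow> y \<in> carr R \<Longrightarrow> x \<^bold>* y \<in> carr R"
  and a_inv_closed: "x \<in> carr R \<Longrightarrow> neg R x \<in> carr R"
  and s_closed: "x \<in> carr R \<Longrightarrow> smul R c x \<in> carr R"
  and a_assoc: "x \<in> carr R \<Longrightarrow> y \<in> carr R \<Longrightarrow> z \<in> carr R \<Longrightarrow> x \<^bold>+ y \<^bold>+ z = x \<^bold>+ (y \<^bold>+ z)"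
  and a_comm: "x \<in> carr R \<Longrightarrow> y \<in> carr R \<Longrightarrow> x \<^bold>+ y = y \<^bold>+ x"
  and l_zero: "x \<in> carr R \<Longrightarrow> zer R \<^bold>+ x = x"
  and l_neg: "x \<in> carr R \<Longrightarrow> neg R x \<^bold>+ x = zer R"
  and m_assoc: "x \<in> carr R \<Longrightarrow> y \<in> carr R \<Longrightarrow> z \<in> carr R \<Longrightarrow> x \<^bold>* y \<^bold>* z = x \<^bold>* (y \<^bold>* z)"
  and m_comm: "x \<in> carr R \<Longrightarrow> y \<in> carr R \<Longrightarrow> x \<^bold>* y = y \<^bold>* x"
  and r_distr: "x \<in> carr R \<Longrightarrow> y \<in> carr R \<Longrightarrow> z \<in> carr R \<Longrightarrow> z \<^bold>* (x \<^bold>+ y) = z \<^bold>* x \<^bold>+ z \<^bold>* y"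
  and s_one: "x \<in> carr R \<Longrightarrow> smul R 1 x = x"
  and s_ldistr: "x \<in> carr R \<Longrightarrow> smul R (a + b) x = smul R a x \<^bold>+ smul R b x"
  and s_rdistr: "x \<in> carr R \<Longrightarrow> y \<in> carr R \<Longrightarrow> smul R a (x \<^bold>+ y) = smul R a x \<^bold>+ smul R a y"
  using comm_assoc_kalg unfolding comm_assoc_kalg_def by auto

lemma minus_eq: "x \<^bold>- y = x \<^bold>+ neg R y"
  by (simp add: sub_def)

lemma minus_closed: "x \<in> carr R \<Longrightarrow> y \<in> carr R \<Longrightarrow> x \<^bold>- y \<in> carr R"
  by (simp add: minus_eq a_closed a_inv_closed)

lemma l_distr: "x \<in> carr R \<Longrightarrow> y \<in> carr R \<Longrightarrow> z \<in> carr R \<Longrightarrow> (x \<^bold>+ y) \<^bold>* z = x \<^bold>* z \<^bold>+ y \<^bold>* z"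
  by (metis r_distr m_comm a_closed)

lemma a_lcomm: "x \<in> carr R \<Longrightarrow> y \<in> carr R \<Longrightarrow> z \<in> carr R \<Longrightarrow> x \<^bold>+ (y \<^bold>+ z) = y \<^bold>+ (x \<^bold>+ z)"
  by (metis a_assoc a_comm)

lemma m_lcomm: "x \<in> carr R \<Longrightarrow> y \<in> carr R \<Longrightarrow> z \<in> carr R \<Longrightarrow> x \<^bold>* (y \<^bold>* z) = y \<^bold>* (x \<^bold>* z)"
  by (metis m_assoc m_comm)

lemma r_zero: "x \<in> carr R \<Longrightarrow> x \<^bold>+ zer R = x"
  by (metis a_comm l_zero zero_closed)

lemma r_neg: "x \<in> carr R \<Longrightarrow> x \<^bold>+ neg R x = zer R"
  by (metis a_comm l_neg a_inv_closed)

lemma r_neg1: "x \<in> carr R \<Longrightarrow> y \<in> carr R \<Longrightarrow> neg R x \<^bold>+ (x \<^bold>+ y) = y"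
  by (metis a_assoc l_neg l_zero a_inv_closed)

lemma r_neg2: "x \<in> carr R \<Longrightarrow> y \<in> carr R \<Longrightarrow> x \<^bold>+ (neg R x \<^bold>+ y) = y"
  by (metis a_assoc r_neg l_zero a_inv_closed)

lemma add_left_cancel: "x \<in> carr R \<Longrightarrow> y \<in> carr R \<Longrightarrow> z \<in> carr R \<Longrightarrow> x \<^bold>+ y = x \<^bold>+ z \<Longrightarrow> y = z"
  by (metis r_neg1)

lemma add_eq_self_imp_zero: "x \<in> carr R \<Longrightarrow> x \<^bold>+ x = x \<Longrightarrow> x = zer R"
  by (metis add_left_cancel r_zero zero_closed)

lemma minus_unique: "x \<in> carr R \<Longrightarrow> y \<in> carr R \<Longrightarrow> x \<^bold>+ y = zer R \<Longrightarrow> y = neg R x"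
  by (metis r_neg add_left_cancel a_inv_closed)

lemma minus_minus: "x \<in> carr R \<Longrightarrow> neg R (neg R x) = x"
  by (metis l_neg minus_unique a_inv_closed)

lemma minus_zero: "neg R (zer R) = zer R"
  by (metis l_zero minus_unique zero_closed)

lemma minus_add:
  assumes "x \<in> carr R" "y \<in> carr R"
  shows "neg R (x \<^bold>+ y) = neg R x \<^bold>+ neg R y"
proof -
  have "(x \<^bold>+ y) \<^bold>+ (neg R x \<^bold>+ neg R y) = zer R"
    using assms by (metis a_assoc a_lcomm r_neg a_inv_closed a_closed r_zero)
  then show ?thesis
    using assms by (metis minus_unique a_closed a_inv_closed)
qed

lemma r_null: "x \<in> carr R \<Longrightarrow> x \<^bold>* zer R = zer R"
  by (metis add_eq_self_imp_zero l_zero m_closed r_distr zero_closed)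

lemma l_null: "x \<in> carr R \<Longrightarrow> zer R \<^bold>* x = zer R"
  by (metis r_null m_comm zero_closed)

lemma r_minus: "x \<in> carr R \<Longrightarrow> y \<in> carr R \<Longrightarrow> x \<^bold>* neg R y = neg R (x \<^bold>* y)"
  by (metis minus_unique r_distr r_neg r_null m_closed a_inv_closed)

lemma l_minus: "x \<in> carr R \<Longrightarrow> y \<in> carr R \<Longrightarrow> neg R x \<^bold>* y = neg R (x \<^bold>* y)"
  by (metis r_minus m_comm a_inv_closed)

lemma s_zero: "x \<in> carr R \<Longrightarrow> smul R 0 x = zer R"
  by (metis add_eq_self_imp_zero add_0 s_closed s_ldistr)

text \<open>The algebra has no unit, so \<^term>\<open>zer R\<close> occupies the slot of the unit, which no rule mentions.\<close>

lemmas comm_assoc_algebra_simprules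
  [algebra add: cring "zer R" "kalg.add R" "neg R" "Defs.sub R" "zer R" "kalg.mul R"] =
  a_closed zero_closed a_inv_closed minus_closed m_closed
  a_assoc l_zero l_neg a_comm m_assoc l_distr m_comm minus_eq
  r_zero r_neg r_neg2 r_neg1 minus_add minus_minus minus_zero
  a_lcomm m_lcomm r_distr l_null r_null l_minus r_minus

lemma linear_endo_zero: "linear_endo R H \<Longrightarrow> H (zer R) = zer R"
  unfolding linear_endo_def by (metis add_eq_self_imp_zero r_zero zero_closed)

lemma linear_endo_sub:
  assumes "linear_endo R H" "x \<in> carr R" "y \<in> carr R"
  shows "H (x \<^bold>- y) = H x \<^bold>- H y"
proof -
  have "H y \<^bold>+ H (neg R y) = zer R"
    using assms linear_endo_zero[OF assms(1)] by (metis linear_endo_def a_inv_closed r_neg)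
  then have "H (neg R y) = neg R (H y)"
    using assms by (intro minus_unique) (auto simp: linear_endo_def a_inv_closed)
  then show ?thesis
    using assms by (simp add: minus_eq linear_endo_def a_inv_closed)
qed

section \<open>Iterated derivations in prime characteristic\<close>

lemma kalg_sum_closed: "(\<And>i. i < n \<Longrightarrow> f i \<in> carr R) \<Longrightarrow> kalg_sum R f n \<in> carr R"
  by (induction n) (auto simp: zero_closed a_closed)

lemma kalg_sum_cong: "(\<And>i. i < n \<Longrightarrow> f i = g i) \<Longrightarrow> kalg_sum R f n = kalg_sum R g n"
  by (induction n) auto

lemma kalg_sum_add:
  "(\<And>i. i < n \<Longrightarrow> f i \<in> carr R) \<Longrightarrow> (\<And>i. i < n \<Longrightarrow> g i \<in> carr R) \<Longrightarrow>
   kalg_sum R (\<lambda>i. f i \<^bold>+ g i) n = kalg_sum R f n \<^bold>+ kalg_sum R g n"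
proof (induction n)
  case 0
  then show ?case by (simp add: l_zero zero_closed)
next
  case (Suc n)
  then have "kalg_sum R f n \<in> carr R" "kalg_sum R g n \<in> carr R" "f n \<in> carr R" "g n \<in> carr R"
    by (auto intro!: kalg_sum_closed)
  with Suc show ?case by (simp add: a_assoc a_lcomm a_closed)
qed

lemma kalg_sum_Suc_shift:
  "(\<And>i. i \<le> n \<Longrightarrow> f i \<in> carr R) \<Longrightarrow> kalg_sum R f (Suc n) = f 0 \<^bold>+ kalg_sum R (\<lambda>i. f (Suc i)) n"
proof (induction n)
  case 0
  then show ?case by (simp add: l_zero r_zero)
next
  case (Suc n)
  then have "kalg_sum R (\<lambda>i. f (Suc i)) n \<in> carr R" "f 0 \<in> carr R" "f (Suc n) \<in> carr R"
    by (auto intro!: kalg_sum_closed)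
  with Suc show ?case by (simp add: a_assoc)
qed

lemma linear_endo_kalg_sum:
  "linear_endo R H \<Longrightarrow> (\<And>i. i < n \<Longrightarrow> f i \<in> carr R) \<Longrightarrow> H (kalg_sum R f n) = kalg_sum R (\<lambda>i. H (f i)) n"
  by (induction n) (auto simp: linear_endo_zero linear_endo_def kalg_sum_closed)

lemma kalg_sum_eq_first:
  "0 < n \<Longrightarrow> f 0 \<in> carr R \<Longrightarrow> (\<And>i. 0 < i \<Longrightarrow> i < n \<Longrightarrow> f i = zer R) \<Longrightarrow> kalg_sum R f n = f 0"
proof (induction n)
  case (Suc n)
  then show ?case by (cases n) (simp_all add: l_zero r_zero)
qed simp

lemma kalg_sum_pascal:
  assumes g: "\<And>i j. g i j \<in> carr R"
  shows "kalg_sum R (\<lambda>i. smul R (of_nat (m choose i)) (g (Suc i) (m - i) \<^bold>+ g i (Suc (m - i)))) (Suc m) =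
         kalg_sum R (\<lambda>i. smul R (of_nat (Suc m choose i)) (g i (Suc m - i))) (Suc (Suc m))"
proof -
  define A where "A i = smul R (of_nat (m choose i)) (g (Suc i) (m - i))" for i
  define B where "B i = smul R (of_nat (m choose i)) (g i (Suc (m - i)))" for i
  define B' where "B' i = smul R (of_nat (m choose Suc i)) (g (Suc i) (m - i))" for i
  define T where "T i = smul R (of_nat (Suc m choose i)) (g i (Suc m - i))" for i
  have closed: "A i \<in> carr R" "B i \<in> carr R" "B' i \<in> carr R" "T i \<in> carr R" for i
    unfolding A_def B_def B'_def T_def using g by (auto intro: s_closed)
  have sums_closed: "kalg_sum R A (Suc m) \<in> carr R" "kalg_sum R B' m \<in> carr R"
    by (rule kalg_sum_closed, rule closed)+
  have "kalg_sum R B (Suc m) = T 0 \<^bold>+ kalg_sum R B' m"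
  proof -
    have "kalg_sum R (\<lambda>i. B (Suc i)) m = kalg_sum R B' m"
      by (rule kalg_sum_cong) (simp add: B_def B'_def Suc_diff_Suc)
    then show ?thesis
      using kalg_sum_Suc_shift[of m B] closed by (simp add: B_def T_def)
  qed
  moreover have "kalg_sum R T (Suc (Suc m)) = T 0 \<^bold>+ (kalg_sum R A (Suc m) \<^bold>+ kalg_sum R B' (Suc m))"
  proof -
    have "kalg_sum R (\<lambda>i. T (Suc i)) (Suc m) = kalg_sum R (\<lambda>i. A i \<^bold>+ B' i) (Suc m)"
      by (rule kalg_sum_cong) (simp add: T_def A_def B'_def s_ldistr g)
    then show ?thesis
      using kalg_sum_Suc_shift[of "Suc m" T] kalg_sum_add[of "Suc m" A B'] closed by simp
  qed
  moreover have "B' m = zer R"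
    by (simp add: B'_def s_zero g binomial_eq_0)
  ultimately show ?thesis
    using kalg_sum_add[of "Suc m" A B] closed sums_closed
    by (simp flip: A_def B_def T_def add: r_zero zero_closed a_lcomm s_rdistr g)
qed

lemma derivation_funpow_mul:
  assumes D: "derivation R D" and x: "x \<in> carr R" and y: "y \<in> carr R"
  shows "(D ^^ m) (x \<^bold>* y) =
    kalg_sum R (\<lambda>i. smul R (of_nat (m choose i)) ((D ^^ i) x \<^bold>* (D ^^ (m - i)) y)) (Suc m)"
proof (induction m)
  case 0
  then show ?case using x y by (simp add: l_zero s_one m_closed)
next
  case (Suc m)
  note lin = derivation_linear_endo[OF D]
  define g where "g i j = (D ^^ i) x \<^bold>* (D ^^ j) y" for i j
  have g_closed: "g i j \<in> carr R" for i j
    unfolding g_def using derivation_funpow_linear_endo[OF D] x y by (simp add: linear_endo_closed m_closed)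
  have "D (g i j) = g (Suc i) j \<^bold>+ g i (Suc j)" for i j
    unfolding g_def using derivation_funpow_linear_endo[OF D] x y
    by (simp add: linear_endo_closed derivation_mul[OF D])
  then have step: "D (smul R (of_nat (m choose i)) (g i (m - i))) =
      smul R (of_nat (m choose i)) (g (Suc i) (m - i) \<^bold>+ g i (Suc (m - i)))" for i
    using lin g_closed by (simp add: linear_endo_def)
  have "(D ^^ Suc m) (x \<^bold>* y) = D (kalg_sum R (\<lambda>i. smul R (of_nat (m choose i)) (g i (m - i))) (Suc m))"
    using Suc.IH by (simp add: g_def del: kalg_sum.simps)
  also have "\<dots> = kalg_sum R (\<lambda>i. D (smul R (of_nat (m choose i)) (g i (m - i)))) (Suc m)"
    by (rule linear_endo_kalg_sum[OF lin]) (simp add: s_closed g_closed)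
  also have "\<dots> =
      kalg_sum R (\<lambda>i. smul R (of_nat (m choose i)) (g (Suc i) (m - i) \<^bold>+ g i (Suc (m - i)))) (Suc m)"
    by (rule kalg_sum_cong) (rule step)
  also have "\<dots> = kalg_sum R (\<lambda>i. smul R (of_nat (Suc m choose i)) (g i (Suc m - i))) (Suc (Suc m))"
    by (rule kalg_sum_pascal[OF g_closed])
  finally show ?case by (simp add: g_def)
qed

lemma derivation_funpow_prime:
  assumes D: "derivation R D" and p: "prime p" "CHAR('k) = p"
  shows "derivation R (D ^^ p)"
proof -
  note lin = derivation_funpow_linear_endo[OF D]
  have "(D ^^ p) (x \<^bold>* y) = (D ^^ p) x \<^bold>* y \<^bold>+ x \<^bold>* (D ^^ p) y"
    if x: "x \<in> carr R" and y: "y \<in> carr R" for x y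
  proof -
    define f where "f i = smul R (of_nat (p choose i)) ((D ^^ i) x \<^bold>* (D ^^ (p - i)) y)" for i
    have f_closed: "f i \<in> carr R" for i
      unfolding f_def using lin x y by (simp add: linear_endo_closed s_closed m_closed)
    have "f i = zer R" if "0 < i" "i < p" for i
    proof -
      have "p dvd (p choose i)"
        using that p by (intro dvd_choose_prime) auto
      then have "(of_nat (p choose i) :: 'k) = 0"
        using p of_nat_eq_0_iff_char_dvd by metis
      then show ?thesis
        unfolding f_def using lin x y by (simp add: s_zero linear_endo_closed m_closed)
    qed
    then have "kalg_sum R f p = f 0"
      using p f_closed by (intro kalg_sum_eq_first) (auto simp: prime_gt_0_nat)
    moreover have "(D ^^ p) (x \<^bold>* y) = kalg_sum R f p \<^bold>+ f p"
      unfolding f_def using derivation_funpow_mul[OF D x y] by simp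
    ultimately show ?thesis
      unfolding f_def using lin x y by (simp add: s_one m_closed a_comm linear_endo_closed)
  qed
  then show ?thesis
    using lin by (simp add: derivation_iff_linear_endo)
qed

lemma derivation_funpow_char_power:
  assumes D: "derivation R D" and p: "CHAR('k) = p" "p > 0"
  shows "derivation R (D ^^ (p ^ n))"
proof (induction n)
  case 0
  then show ?case using D by simp
next
  case (Suc n)
  have "prime p"
    using prime_CHAR_semidom[where 'a='k] p by simp
  then have "derivation R ((D ^^ (p ^ n)) ^^ p)"
    using derivation_funpow_prime Suc.IH p by blast
  then show ?case by (simp add: funpow_mult mult.commute)
qed

section \<open>Multiplications that factor through a derivation\<close>

lemma assoc_closed:
  assumes "\<And>u v. u \<in> carr R \<Longrightarrow> v \<in> carr R \<Longrightarrow> f u v \<in> carr R"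
    and "x \<in> carr R" "y \<in> carr R" "z \<in> carr R"
  shows "assoc R f x y z \<in> carr R"
  using assms by (simp add: assoc_def minus_closed)

lemma derivation_assoc_formula:
  assumes G: "derivation R G" and x: "x \<in> carr R" and y: "y \<in> carr R" and z: "z \<in> carr R"
  shows "assoc R (\<lambda>u v. G (u \<^bold>* v)) x y z =
    x \<^bold>* (G y \<^bold>* G z \<^bold>+ y \<^bold>* G (G z)) \<^bold>- z \<^bold>* (G (G x) \<^bold>* y \<^bold>+ G x \<^bold>* G y)"
proof -
  note closed = derivation_closed[OF G]
  have GG: "G x \<in> carr R" "G y \<in> carr R" "G z \<in> carr R"
    "G (G x) \<in> carr R" "G (G y) \<in> carr R" "G (G z) \<in> carr R"
    using x y z by (simp_all add: closed)
  show ?thesis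
    using x y z
    by (simp add: assoc_def derivation_mul[OF G] derivation_add[OF G] closed m_closed a_closed)
      (use GG in algebra)
qed

lemma derivation_mul_identity:
  assumes G: "derivation R G"
    and x: "x \<in> carr R" and y: "y \<in> carr R" and z: "z \<in> carr R" and t: "t \<in> carr R"
  defines "n \<equiv> \<lambda>u v. G (u \<^bold>* v)"
  shows "n x y \<^bold>* n z t \<^bold>- n x t \<^bold>* n z y = assoc R n x y z \<^bold>* t \<^bold>- assoc R n x t z \<^bold>* y"
proof -
  note closed = derivation_closed[OF G]
  have GG: "G x \<in> carr R" "G y \<in> carr R" "G z \<in> carr R" "G t \<in> carr R"
    "G (G x) \<in> carr R" "G (G y) \<in> carr R" "G (G z) \<in> carr R" "G (G t) \<in> carr R"
    using x y z t by (simp_all add: closed)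
  show ?thesis
    unfolding n_def derivation_assoc_formula[OF G x y z] derivation_assoc_formula[OF G x t z]
    using x y z t by (simp add: derivation_mul[OF G] closed) (use GG in algebra)
qed

theorem tortken_mul_through_derivation:
  assumes E: "linear_endo R E" and F: "linear_endo R F" and G: "derivation R G"
    and EF: "\<And>a. a \<in> carr R \<Longrightarrow> E (F a) = G a"
    and m: "\<And>a b. a \<in> carr R \<Longrightarrow> b \<in> carr R \<Longrightarrow> m a b = F (E a \<^bold>* E b)"
  shows "tortken R m"
  unfolding tortken_def
proof (intro ballI)
  fix a b c d
  assume a: "a \<in> carr R" and b: "b \<in> carr R" and c: "c \<in> carr R" and d: "d \<in> carr R"
  define n where "n = (\<lambda>u v. G (u \<^bold>* v))"
  note E_closed = linear_endo_closed[OF E]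
  have m_closed': "m u v \<in> carr R" if "u \<in> carr R" "v \<in> carr R" for u v
    using that by (simp add: m linear_endo_closed[OF F] E_closed m_closed)
  have n_closed: "n u v \<in> carr R" if "u \<in> carr R" "v \<in> carr R" for u v
    using that by (simp add: n_def derivation_closed[OF G] m_closed)
  have E_m: "E (m u v) = n (E u) (E v)" if "u \<in> carr R" "v \<in> carr R" for u v
    using that by (simp add: m n_def EF E_closed m_closed)
  have E_assoc: "E (assoc R m u v w) = assoc R n (E u) (E v) (E w)"
    if "u \<in> carr R" "v \<in> carr R" "w \<in> carr R" for u v w
    using that E by (simp add: assoc_def linear_endo_sub E_m m_closed')
  have m_m: "m (m u v) (m w s) = F (n (E u) (E v) \<^bold>* n (E w) (E s))"
    if "u \<in> carr R" "v \<in> carr R" "w \<in> carr R" "s \<in> carr R" for u v w s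
    using that m[of "m u v" "m w s"] by (simp add: m_closed' E_m)
  have "m (m a b) (m c d) \<^bold>- m (m a d) (m c b) =
      F (n (E a) (E b) \<^bold>* n (E c) (E d) \<^bold>- n (E a) (E d) \<^bold>* n (E c) (E b))"
    using a b c d F by (simp add: m_m linear_endo_sub n_closed E_closed m_closed)
  also have "\<dots> = F (assoc R n (E a) (E b) (E c) \<^bold>* E d \<^bold>- assoc R n (E a) (E d) (E c) \<^bold>* E b)"
    using derivation_mul_identity[OF G] a b c d by (simp add: n_def E_closed)
  also have "\<dots> = m (assoc R m a b c) d \<^bold>- m (assoc R m a d c) b"
    using a b c d F
    by (simp add: m E_assoc assoc_closed[OF m_closed'] assoc_closed[OF n_closed] linear_endo_sub
        E_closed m_closed)
  finally show "m (m a b) (m c d) \<^bold>- m (m a d) (m c b) = m (assoc R m a b c) d \<^bold>- m (assoc R m a d c) b" .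
qed

lemma tortken_box_diagonal:
  assumes D: "derivation R D" and p: "CHAR('k) = p" "p > 0"
  shows "tortken R (box p k k R D)"
proof (rule tortken_mul_through_derivation)
  show "linear_endo R (D ^^ (p ^ k - 1))" "linear_endo R D"
    using D by (simp_all add: derivation_funpow_linear_endo derivation_linear_endo)
  show "derivation R (D ^^ p ^ k)"
    using derivation_funpow_char_power[OF D p] .
  show "(D ^^ (p ^ k - 1)) (D a) = (D ^^ p ^ k) a" for a
  proof -
    have "Suc (p ^ k - 1) = p ^ k"
      using p by simp
    then show ?thesis by (metis funpow_Suc_right o_apply)
  qed
  show "box p k k R D a b = D ((D ^^ (p ^ k - 1)) a \<^bold>* (D ^^ (p ^ k - 1)) b)" for a b
    by (simp add: box_def)
qed

lemma tortken_box_char_two: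
  assumes D: "derivation R D" and two: "CHAR('k) = 2"
  shows "tortken R (box 2 k (Suc k) R D)"
proof -
  define q where "q = (2::nat) ^ k"
  have q: "q \<ge> 1" "2 ^ Suc k = 2 * q"
    by (simp_all add: q_def)
  note lin = derivation_funpow_linear_endo[OF D]
  have Dq: "derivation R (D ^^ q)" and D2q: "derivation R (D ^^ (2 * q))"
    using derivation_funpow_char_power[OF D two, of k] derivation_funpow_char_power[OF D two, of "Suc k"]
    by (simp_all add: q_def)
  have box_eq: "box 2 k (Suc k) R D a b = (D ^^ (q + 1)) ((D ^^ (q - 1)) a \<^bold>* (D ^^ (q - 1)) b)"
    if a: "a \<in> carr R" and b: "b \<in> carr R" for a b
  proof -
    define x y where "x = (D ^^ (q - 1)) a" and "y = (D ^^ (q - 1)) b"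
    have xy: "x \<in> carr R" "y \<in> carr R"
      using lin a b by (simp_all add: x_def y_def linear_endo_closed)
    have "(D ^^ (2 * q - 1)) a = (D ^^ q) x" "(D ^^ (2 * q - 1)) b = (D ^^ q) y"
      using q by (simp_all add: x_def y_def mult_2 flip: funpow_add[THEN fun_cong, unfolded o_apply])
    then have "box 2 k (Suc k) R D a b = D (x \<^bold>* (D ^^ q) y \<^bold>+ (D ^^ q) x \<^bold>* y)"
      by (simp add: box_eq_sym_box sym_box_def x_def y_def q q_def)
    also have "\<dots> = D ((D ^^ q) (x \<^bold>* y))"
      using xy lin by (simp add: derivation_mul[OF Dq] a_comm m_closed linear_endo_closed)
    finally show ?thesis by (simp add: x_def y_def)
  qed
  have EF: "(D ^^ (q - 1)) ((D ^^ (q + 1)) a) = (D ^^ (2 * q)) a" for a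
  proof -
    have "(q - 1) + (q + 1) = 2 * q"
      using q by simp
    then show ?thesis by (metis funpow_add o_apply)
  qed
  show ?thesis
    by (rule tortken_mul_through_derivation[OF lin lin D2q EF box_eq])
qed

end

section \<open>The counterexample in the algebra of Hurwitz series\<close>

lemma of_nat_choose_char_power_eq_0:
  assumes p: "CHAR('k::field) = p" "p > 0" and i: "0 < i" "i < p ^ l"
  shows "(of_nat (p ^ l choose i) :: 'k) = 0"
proof -
  have "prime CHAR('k poly)"
    using prime_CHAR_semidom[where 'a='k] p by simp
  then have "([:1, 1:] :: 'k poly) ^ p ^ l = 1 ^ p ^ l + [:0, 1:] ^ p ^ l"
    using p by (subst freshmans_dream'[symmetric]) (simp_all add: one_pCons)
  then have "coeff (([:1, 1:] :: 'k poly) ^ p ^ l) i = coeff (1 + monom 1 (p ^ l)) i"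
    by (simp add: monom_altdef)
  then show ?thesis
    using i by (simp add: coeff_linear_poly_power)
qed

lemma of_nat_choose_add_char_power:
  assumes p: "CHAR('k::field) = p" "p > 0" and j: "j < p ^ l"
  shows "(of_nat ((p ^ l + m) choose j) :: 'k) = of_nat (m choose j)"
proof -
  have "(of_nat ((p ^ l + m) choose j) :: 'k) = (\<Sum>i\<le>j. of_nat (p ^ l choose i) * of_nat (m choose (j - i)))"
    by (simp flip: vandermonde)
  also have "\<dots> = of_nat (p ^ l choose 0) * of_nat (m choose j) +
      (\<Sum>i<j. of_nat (p ^ l choose Suc i) * of_nat (m choose (j - Suc i)))"
    by (subst sum.atMost_shift) simp
  also have "(\<Sum>i<j. of_nat (p ^ l choose Suc i) * (of_nat (m choose (j - Suc i)) :: 'k)) = 0"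
    using of_nat_choose_char_power_eq_0[OF p] j by (intro sum.neutral) auto
  finally show ?thesis by simp
qed

definition hurwitz_mul :: "(nat \<Rightarrow> 'k::semiring_1) \<Rightarrow> (nat \<Rightarrow> 'k) \<Rightarrow> nat \<Rightarrow> 'k" where
  "hurwitz_mul f g n = (\<Sum>i\<le>n. of_nat (n choose i) * f i * g (n - i))"

definition hurwitz_deriv :: "(nat \<Rightarrow> 'k) \<Rightarrow> nat \<Rightarrow> 'k" where
  "hurwitz_deriv f n = f (Suc n)"

lemma hurwitz_mul_commute: "hurwitz_mul f g = hurwitz_mul g (f :: nat \<Rightarrow> 'k::comm_semiring_1)"
proof (rule ext)
  fix n
  have "hurwitz_mul f g n = (\<Sum>i=0..n. of_nat (n choose (n + 0 - i)) * f (n + 0 - i) * g (n - (n + 0 - i)))"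
    unfolding hurwitz_mul_def atLeast0AtMost[symmetric] by (rule sum.atLeastAtMost_rev)
  also have "\<dots> = hurwitz_mul g f n"
    unfolding hurwitz_mul_def atLeast0AtMost[symmetric]
    by (rule sum.cong) (auto simp: binomial_symmetric[symmetric] mult_ac)
  finally show "hurwitz_mul f g n = hurwitz_mul g f n" .
qed

lemma hurwitz_mul_assoc:
  fixes f g h :: "nat \<Rightarrow> 'k::comm_semiring_1"
  shows "hurwitz_mul (hurwitz_mul f g) h = hurwitz_mul f (hurwitz_mul g h)"
proof (rule ext)
  fix n
  define G where "G j t = of_nat (n choose (j + t)) * of_nat ((j + t) choose j) * f j * g t * h (n - (j + t))" for j t
  have "hurwitz_mul (hurwitz_mul f g) h n =
      (\<Sum>k\<le>n. \<Sum>j\<le>k. of_nat (n choose k) * (of_nat (k choose j) * f j * g (k - j)) * h (n - k))"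
    by (simp add: hurwitz_mul_def sum_distrib_left sum_distrib_right)
  also have "\<dots> = (\<Sum>k\<le>n. \<Sum>j\<le>k. G j (k - j))"
    by (intro sum.cong refl) (auto simp: G_def mult_ac)
  also have "\<dots> = (\<Sum>(j, t)\<in>{(j, t). j + t \<le> n}. G j t)"
    by (rule sum.triangle_reindex_eq[symmetric])
  also have "{(j, t). j + t \<le> n} = Sigma {..n} (\<lambda>j. {..n - j})"
    by auto
  also have "(\<Sum>(j, t)\<in>Sigma {..n} (\<lambda>j. {..n - j}). G j t) = (\<Sum>j\<le>n. \<Sum>t\<le>n - j. G j t)"
    by (rule sum.Sigma[symmetric]) auto
  also have "\<dots> = hurwitz_mul f (hurwitz_mul g h) n"
    unfolding hurwitz_mul_def sum_distrib_left
  proof (intro sum.cong refl)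
    fix j t assume "j \<in> {..n}" "t \<in> {..n - j}"
    then have "(n choose (j + t)) * ((j + t) choose j) = (n choose j) * ((n - j) choose t)"
      using choose_mult[of j "j + t" n] by simp
    then have "(of_nat (n choose (j + t)) :: 'k) * of_nat ((j + t) choose j) = of_nat (n choose j) * of_nat ((n - j) choose t)"
      by (metis of_nat_mult)
    then show "G j t = of_nat (n choose j) * f j * (of_nat ((n - j) choose t) * g t * h (n - j - t))"
      unfolding G_def by (simp add: mult_ac diff_diff_left)
  qed
  finally show "hurwitz_mul (hurwitz_mul f g) h n = hurwitz_mul f (hurwitz_mul g h) n" .
qed

lemma hurwitz_deriv_mul:
  "hurwitz_deriv (hurwitz_mul f g) = (\<lambda>n. hurwitz_mul (hurwitz_deriv f) g n + hurwitz_mul f (hurwitz_deriv g) n)"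
proof (rule ext)
  fix n
  have "hurwitz_deriv (hurwitz_mul f g) n = (\<Sum>i\<le>Suc n. of_nat (Suc n choose i) * f i * g (Suc n - i))"
    by (simp add: hurwitz_deriv_def hurwitz_mul_def)
  also have "\<dots> = f 0 * g (Suc n) + (\<Sum>i\<le>n. of_nat (Suc n choose Suc i) * f (Suc i) * g (Suc n - Suc i))"
    by (subst sum.atMost_Suc_shift) simp
  also have "\<dots> = f 0 * g (Suc n) + (\<Sum>i\<le>n. of_nat (n choose Suc i) * f (Suc i) * g (n - i))
      + hurwitz_mul (hurwitz_deriv f) g n"
    by (simp add: hurwitz_mul_def hurwitz_deriv_def sum.distrib distrib_right add_ac)
  finally have "hurwitz_deriv (hurwitz_mul f g) n = f 0 * g (Suc n) +
      (\<Sum>i\<le>n. of_nat (n choose Suc i) * f (Suc i) * g (n - i)) + hurwitz_mul (hurwitz_deriv f) g n" .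
  moreover have "hurwitz_mul f (hurwitz_deriv g) n =
      f 0 * g (Suc n) + (\<Sum>i\<le>n. of_nat (n choose Suc i) * f (Suc i) * g (n - i))"
  proof -
    have "hurwitz_mul f (hurwitz_deriv g) n = (\<Sum>i\<le>Suc n. of_nat (n choose i) * f i * g (Suc n - i))"
      by (simp add: hurwitz_mul_def hurwitz_deriv_def Suc_diff_le binomial_eq_0)
    then show ?thesis
      by (subst (asm) sum.atMost_Suc_shift) simp
  qed
  ultimately show "hurwitz_deriv (hurwitz_mul f g) n = hurwitz_mul (hurwitz_deriv f) g n + hurwitz_mul f (hurwitz_deriv g) n"
    by (simp add: add_ac)
qed

lemma hurwitz_mul_add_right:
  "hurwitz_mul f (\<lambda>n. g n + h n) = (\<lambda>n. hurwitz_mul f g n + hurwitz_mul f h n)"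
  by (simp add: hurwitz_mul_def fun_eq_iff distrib_left distrib_right sum.distrib)

lemma hurwitz_mul_scale_left:
  "(\<lambda>n. c * hurwitz_mul f g n) = hurwitz_mul (\<lambda>n. c * f n) (g :: nat \<Rightarrow> 'k::comm_semiring_1)"
  by (simp add: hurwitz_mul_def fun_eq_iff sum_distrib_left mult_ac)

lemma hurwitz_mul_scale_right:
  "(\<lambda>n. c * hurwitz_mul f g n) = hurwitz_mul f (\<lambda>n. c * (g n :: 'k::comm_semiring_1))"
  by (simp add: hurwitz_mul_def fun_eq_iff sum_distrib_left mult_ac)

definition hurwitz_algebra :: "('k::field, nat \<Rightarrow> 'k) kalg" where
  "hurwitz_algebra = \<lparr>carr = UNIV, kalg.add = (\<lambda>f g n. f n + g n), zer = (\<lambda>n. 0),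
     neg = (\<lambda>f n. - f n), kalg.mul = hurwitz_mul, smul = (\<lambda>c f n. c * f n)\<rparr>"

lemma hurwitz_algebra_simps [simp]:
  "carr hurwitz_algebra = UNIV" "kalg.add hurwitz_algebra = (\<lambda>f g n. f n + g n)"
  "zer hurwitz_algebra = (\<lambda>n. 0)" "neg hurwitz_algebra = (\<lambda>f n. - f n)"
  "kalg.mul hurwitz_algebra = hurwitz_mul" "smul hurwitz_algebra = (\<lambda>c f n. c * f n)"
  by (simp_all add: hurwitz_algebra_def)

lemma comm_assoc_kalg_hurwitz_algebra: "comm_assoc_kalg (hurwitz_algebra :: ('k::field, nat \<Rightarrow> 'k) kalg)"
  unfolding comm_assoc_kalg_def hurwitz_algebra_simps
  by (auto simp: algebra_simps hurwitz_mul_assoc hurwitz_mul_add_right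
      intro: hurwitz_mul_commute hurwitz_mul_scale_left hurwitz_mul_scale_right)

lemma derivation_hurwitz_deriv: "derivation (hurwitz_algebra :: ('k::field, nat \<Rightarrow> 'k) kalg) hurwitz_deriv"
  unfolding derivation_def by (simp add: hurwitz_deriv_mul) (simp add: hurwitz_deriv_def fun_eq_iff)

definition hurwitz_monom :: "'k::zero \<Rightarrow> nat \<Rightarrow> nat \<Rightarrow> 'k" where
  "hurwitz_monom c m n = (if n = m then c else 0)"

lemma funpow_hurwitz_deriv: "(hurwitz_deriv ^^ j) f = (\<lambda>n. f (n + j))"
  by (induction j arbitrary: f) (simp_all add: hurwitz_deriv_def fun_eq_iff)

lemma funpow_hurwitz_deriv_monom:
  "(hurwitz_deriv ^^ j) (hurwitz_monom c m) = (if j \<le> m then hurwitz_monom c (m - j) else (\<lambda>_. 0))"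
  by (auto simp: funpow_hurwitz_deriv hurwitz_monom_def fun_eq_iff)

lemma hurwitz_deriv_monom:
  "hurwitz_deriv (hurwitz_monom c m) = (if m = 0 then (\<lambda>_. 0) else hurwitz_monom c (m - 1))"
  by (auto simp: hurwitz_deriv_def hurwitz_monom_def fun_eq_iff)

lemma hurwitz_deriv_zero [simp]: "hurwitz_deriv (\<lambda>_. 0) = (\<lambda>_. 0)"
  by (simp add: hurwitz_deriv_def fun_eq_iff)

lemma funpow_hurwitz_deriv_zero [simp]: "(hurwitz_deriv ^^ j) (\<lambda>_. 0) = (\<lambda>_. 0)"
  by (simp add: funpow_hurwitz_deriv)

lemma hurwitz_mul_zero [simp]:
  "hurwitz_mul (\<lambda>_. 0) f = (\<lambda>_. 0)" "hurwitz_mul f (\<lambda>_. 0) = (\<lambda>_. 0)"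
  by (simp_all add: hurwitz_mul_def fun_eq_iff)

lemma hurwitz_mul_monom:
  fixes c d :: "'k::comm_semiring_1"
  shows "hurwitz_mul (hurwitz_monom c i) (hurwitz_monom d j) =
    hurwitz_monom (c * d * of_nat ((i + j) choose i)) (i + j)"
proof (rule ext)
  fix n
  have "hurwitz_mul (hurwitz_monom c i) (hurwitz_monom d j) n =
      (\<Sum>t\<le>n. if t = i then of_nat (n choose i) * c * hurwitz_monom d j (n - i) else 0)"
    unfolding hurwitz_mul_def by (rule sum.cong) (auto simp: hurwitz_monom_def)
  also have "\<dots> = hurwitz_monom (c * d * of_nat ((i + j) choose i)) (i + j) n"
    by (auto simp: hurwitz_monom_def mult_ac)
  finally show "hurwitz_mul (hurwitz_monom c i) (hurwitz_monom d j) n =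
      hurwitz_monom (c * d * of_nat ((i + j) choose i)) (i + j) n" .
qed

lemma sym_box_hurwitz:
  "sym_box q Q hurwitz_algebra hurwitz_deriv a b = hurwitz_deriv (\<lambda>n.
     hurwitz_mul ((hurwitz_deriv ^^ (q - 1)) a) ((hurwitz_deriv ^^ (Q - 1)) b) n +
     hurwitz_mul ((hurwitz_deriv ^^ (Q - 1)) a) ((hurwitz_deriv ^^ (q - 1)) b) n)"
  by (simp add: sym_box_def)

lemma sym_box_hurwitz_commute:
  "sym_box q Q (hurwitz_algebra :: ('k::field, nat \<Rightarrow> 'k) kalg) hurwitz_deriv a b = sym_box q Q hurwitz_algebra hurwitz_deriv b a"
  by (simp add: sym_box_hurwitz hurwitz_mul_commute add.commute)

lemma sym_box_hurwitz_zero: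
  "sym_box q Q (hurwitz_algebra :: ('k::field, nat \<Rightarrow> 'k) kalg) hurwitz_deriv (\<lambda>_. 0) b = (\<lambda>_. 0)"
  by (simp add: sym_box_hurwitz)

lemma sym_box_hurwitz_monom_table:
  fixes q Q :: nat
  assumes q: "1 \<le> q" "2 * q < Q"
  defines "m \<equiv> sym_box q Q (hurwitz_algebra :: ('k::field, nat \<Rightarrow> 'k) kalg) hurwitz_deriv"
    and "e \<equiv> hurwitz_monom (1::'k)"
  shows "m (e (q - 1)) (e (Q - 1)) = (\<lambda>_. 0)"
    and "m (e (q - 1)) (e (q - 1)) = (\<lambda>_. 0)"
    and "m (e (2 * q - 1)) (e (Q - 1)) = e (q - 1)"
    and "m (e (q - 1)) (e (2 * Q)) = e Q"
    and "m (e Q) (e (q - 1)) = e 0"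
    and "m (e Q) (e (2 * q - 1)) = hurwitz_monom (of_nat (q + 1)) q"
    and "m (e (2 * q - 1)) (e (2 * Q)) = hurwitz_monom (of_nat ((Q + q + 1) choose q)) (Q + q)"
    and "m (e (q - 1)) (hurwitz_monom c (Q + q)) = hurwitz_monom c q"
  using q by (auto simp: m_def e_def sym_box_hurwitz funpow_hurwitz_deriv_monom hurwitz_mul_monom
      hurwitz_deriv_monom add_ac)

lemma sym_box_hurwitz_not_tortken:
  fixes q Q :: nat
  assumes q: "1 \<le> q" "2 * q < Q"
    and choose: "(of_nat ((Q + q + 1) choose q) :: 'k::field) = of_nat (q + 1)"
  shows "\<not> tortken (hurwitz_algebra :: ('k, nat \<Rightarrow> 'k) kalg) (sym_box q Q hurwitz_algebra hurwitz_deriv)"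
proof
  define m where "m = sym_box q Q (hurwitz_algebra :: ('k, nat \<Rightarrow> 'k) kalg) hurwitz_deriv"
  define e where "e = hurwitz_monom (1::'k)"
  note table = sym_box_hurwitz_monom_table[OF q, where 'k='k, folded m_def e_def]
  note commute = sym_box_hurwitz_commute[of q Q, where 'k='k, folded m_def]
  note zero = sym_box_hurwitz_zero[of q Q, where 'k='k, folded m_def]
  define a b c d where "a = e (q - 1)" and "b = e (Q - 1)" and "c = e (2 * q - 1)" and "d = e (2 * Q)"
  assume "tortken hurwitz_algebra m"
  have abc: "assoc hurwitz_algebra m a b c = (\<lambda>_. 0)"
    unfolding assoc_def a_def b_def c_def commute[of "e (Q - 1)"] table zero
    by (simp add: sub_def)
  have adc: "assoc hurwitz_algebra m a d c = (\<lambda>_. 0)"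
    unfolding assoc_def a_def d_def c_def commute[of "e (2 * Q)"] table choose
    by (simp add: sub_def)
  have "Defs.sub hurwitz_algebra (m (m a b) (m c d)) (m (m a d) (m c b)) =
      Defs.sub hurwitz_algebra (m (assoc hurwitz_algebra m a b c) d) (m (assoc hurwitz_algebra m a d c) b)"
    using \<open>tortken hurwitz_algebra m\<close> by (simp add: tortken_def)
  then have "Defs.sub hurwitz_algebra (\<lambda>_. 0) (e 0) = Defs.sub hurwitz_algebra (\<lambda>_. 0) (\<lambda>_. 0)"
    unfolding abc adc unfolding a_def b_def c_def d_def table zero .
  then show False
    by (simp add: e_def hurwitz_monom_def sub_def fun_eq_iff) (metis one_neq_zero)
qed

lemma hurwitz_box_not_tortken:
  assumes p: "CHAR('k::field) = p" "p > 0" and kl: "2 * p ^ k < p ^ l"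
  shows "\<not> tortken (hurwitz_algebra :: ('k, nat \<Rightarrow> 'k) kalg) (box p k l hurwitz_algebra hurwitz_deriv)"
proof -
  have "1 \<le> p ^ k" "k \<noteq> l"
    using p kl by auto
  moreover have "(of_nat ((p ^ l + p ^ k + 1) choose p ^ k) :: 'k) = of_nat (p ^ k + 1)"
    using of_nat_choose_add_char_power[OF p, of "p ^ k" l "p ^ k + 1"] kl by (simp add: add.assoc)
  ultimately show ?thesis
    using sym_box_hurwitz_not_tortken[OF _ kl] by (simp add: box_eq_sym_box)
qed

lemma two_mul_power_less:
  fixes p :: nat
  assumes "k < l" and "2 < p \<or> (p = 2 \<and> k + 1 < l)"
  shows "2 * p ^ k < p ^ l"
  using assms(2)
proof
  assume p: "2 < p"
  then have "2 * p ^ k < p ^ Suc k"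
    by simp
  also have "\<dots> \<le> p ^ l"
    using p assms(1) by (intro power_increasing) auto
  finally show ?thesis .
next
  assume p: "p = 2 \<and> k + 1 < l"
  then have "2 * p ^ k = 2 ^ Suc k"
    by simp
  also have "\<dots> < 2 ^ l"
    using p by (intro power_strict_increasing) auto
  finally show ?thesis
    using p by simp
qed

theorem mainTheorem18:
  fixes p k l :: nat
  assumes "CHAR('k::field) = p" and "p > 0" and "k \<le> l"
  shows "((k = l \<or> (p = 2 \<and> l = k + 1)) \<longrightarrow>
            (\<forall>(R :: ('k, 'a) kalg) D. comm_assoc_kalg R \<longrightarrow> derivation R D \<longrightarrow>
               tortken R (box p k l R D))) \<and>
         (((k \<noteq> l \<and> p > 2) \<or> (p = 2 \<and> l - k > 1)) \<longrightarrow>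
            (\<exists>(R :: ('k, nat \<Rightarrow> 'k) kalg) D. comm_assoc_kalg R \<and> derivation R D \<and>
               \<not> tortken R (box p k l R D)))"
proof (intro conjI impI allI)
  fix R :: "('k, 'a) kalg" and D
  assume kl: "k = l \<or> (p = 2 \<and> l = k + 1)" and "comm_assoc_kalg R" and D: "derivation R D"
  then interpret comm_assoc_algebra R
    by unfold_locales
  show "tortken R (box p k l R D)"
    using kl tortken_box_diagonal[OF D assms(1,2)] tortken_box_char_two[OF D] assms(1) by auto
next
  assume "(k \<noteq> l \<and> p > 2) \<or> (p = 2 \<and> l - k > 1)"
  then have "2 * p ^ k < p ^ l"
    using assms(3) by (intro two_mul_power_less) auto
  then show "\<exists>(R :: ('k, nat \<Rightarrow> 'k) kalg) D. comm_assoc_kalg R \<and> derivation R D \<and>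
      \<not> tortken R (box p k l R D)"
    using comm_assoc_kalg_hurwitz_algebra derivation_hurwitz_deriv hurwitz_box_not_tortken[OF assms(1,2)]
    by blast
qed

end
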